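(* Let $h\ge 2$ and $m\ge h+1$. Over the bidirected $(m,h)$-CCN, the secrecy rate $h-1$ is achievable against a $1$-node passive adversary (by a single-round protocol).
   Context: Network model: a graph with unit-capacity edges; each use of an edge carries one symbol of a finite field $\mathbb{F}$ (taken sufficiently large), and entropies are measured in units of $\log|\mathbb{F}|$. A single source $S$ holds a message $\mathcal{W}$ to be multicast to a set of receivers. Each node (including receivers) may use its own private randomness; nodes share no prior common randomness and no side channel. An $N$-round protocol: in each round every (directed) edge is used at most once, and within a round transmissions may be scheduled in any causal order. Decodability: every receiver recovers $\mathcal{W}$ with zero error. Secrecy: $H(\mathcal{W}\mid \mathcal{V}_{\mathcal{A}})=H(\mathcal{W})$, where $\mathcal{V}_{\mathcal{A}}$ is the adversary's view. The secrecy rate is $H(\mathcal{W})/N$. A $1$-node passive adversary may choose any single node other than the source and the receivers and observes all values delivered to that node; secrecy must hold for every such choice. Directed $(m,h)$-CCN ($m\ge h$): nodes $S$, $S_1,\dots,S_h$, $A_1,\dots,A_m$, $B_1,\dots,B_m$, and $\binom{m}{h}$ receivers, one per $h$-subset of $\{B_1,\dots,B_m\}$; directed edges $S\to S_i$ ($1\le i\le h$), $S_i\to A_i$ ($1\le i\le h$), $S_i\to A_j$ for all $1\le i\le h$, $h<j\le m$, $A_j\to B_j$, and $B_j\to R$ whenever $B_j$ is in the $h$-subset of receiver $R$. The bidirected $(m,h)$-CCN is obtained by adding, for every directed edge $u\to v$ of the directed $(m,h)$-CCN, an additional edge $v\to u$. *)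

theory Defs
  imports "HOL-Algebra.Ring" "HOL-Library.FuncSet"
begin

datatype node = Src | SS nat | AA nat | BB nat | Rcv "nat set"

definition ccn_receivers :: "nat \<Rightarrow> nat \<Rightarrow> node set" where
  "ccn_receivers m h = Rcv ` {T. T \<subseteq> {1..m} \<and> card T = h}"

definition ccn_nodes :: "nat \<Rightarrow> nat \<Rightarrow> node set" where
  "ccn_nodes m h = {Src} \<union> SS ` {1..h} \<union> AA ` {1..m} \<union> BB ` {1..m} \<union> ccn_receivers m h"

definition dir_ccn_edges :: "nat \<Rightarrow> nat \<Rightarrow> (node \<times> node) set" where
  "dir_ccn_edges m h =
     {(Src, SS i) | i. 1 \<le> i \<and> i \<le> h}
   \<union> {(SS i, AA i) | i. 1 \<le> i \<and> i \<le> h}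
   \<union> {(SS i, AA j) | i j. 1 \<le> i \<and> i \<le> h \<and> h < j \<and> j \<le> m}
   \<union> {(AA j, BB j) | j. 1 \<le> j \<and> j \<le> m}
   \<union> {(BB j, Rcv T) | j T. T \<subseteq> {1..m} \<and> card T = h \<and> j \<in> T}"

definition bidir_ccn_edges :: "nat \<Rightarrow> nat \<Rightarrow> (node \<times> node) set" where
  "bidir_ccn_edges m h = dir_ccn_edges m h \<union> {(v, u). (u, v) \<in> dir_ccn_edges m h}"

text \<open>The local information of a node at some moment: the message (only at the source),
  its private random value, and the symbols delivered so far on its incoming edges.\<close>

type_synonym local_info = "nat list option \<times> nat \<times> (node \<times> node \<Rightarrow> nat option)"

definition local_view ::
  "node \<Rightarrow> node \<Rightarrow> nat list \<Rightarrow> (node \<Rightarrow> nat) \<Rightarrow> (node \<times> node \<Rightarrow> nat option) \<Rightarrow> local_info" where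
  "local_view s u w \<rho> vals =
     (if u = s then Some w else None, \<rho> u, \<lambda>e. if snd e = u then vals e else None)"

fun run_edges ::
  "node \<Rightarrow> (node \<times> node \<Rightarrow> local_info \<Rightarrow> nat) \<Rightarrow> (node \<times> node) list \<Rightarrow> nat list \<Rightarrow> (node \<Rightarrow> nat)
    \<Rightarrow> (node \<times> node \<Rightarrow> nat option) \<Rightarrow> (node \<times> node \<Rightarrow> nat option)" where
  "run_edges s enc [] w \<rho> vals = vals"
| "run_edges s enc (e # es) w \<rho> vals =
     run_edges s enc es w \<rho> (vals(e := Some (enc e (local_view s (fst e) w \<rho> vals))))"

definition exec_round ::
  "node \<Rightarrow> (node \<times> node \<Rightarrow> local_info \<Rightarrow> nat) \<Rightarrow> (node \<times> node) list \<Rightarrow> nat list \<Rightarrow> (node \<Rightarrow> nat)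
    \<Rightarrow> (node \<times> node \<Rightarrow> nat option)" where
  "exec_round s enc ord w \<rho> = run_edges s enc ord w \<rho> (\<lambda>_. None)"

definition adv_view ::
  "node \<Rightarrow> (node \<times> node \<Rightarrow> local_info \<Rightarrow> nat) \<Rightarrow> (node \<times> node) list \<Rightarrow> node \<Rightarrow> nat list \<Rightarrow> (node \<Rightarrow> nat)
    \<Rightarrow> (node \<times> node \<Rightarrow> nat option)" where
  "adv_view s enc ord v w \<rho> = (\<lambda>e. if snd e = v then exec_round s enc ord w \<rho> e else None)"

text \<open>A single-round (N = 1) protocol over the finite field F on network (V, E) with source s and
  receivers Rs, multicasting a message W uniform on F^r (so H(W) = r, rate r), with zero-error
  decoding and perfect secrecy against any single node of V - {s} - Rs.
  Private randomness of node u is uniform on {..<k u}, independent across nodes.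
  Since W is uniform (full support), H(W | view) = H(W) is equivalent to the distribution of the
  view being the same for every message value, expressed by counting randomness outcomes.\<close>

definition secure_single_round_scheme ::
  "node set \<Rightarrow> (node \<times> node) set \<Rightarrow> node \<Rightarrow> node set \<Rightarrow> nat ring \<Rightarrow> nat \<Rightarrow> bool" where
  "secure_single_round_scheme V E s Rs F r \<longleftrightarrow>
     (\<exists>(k :: node \<Rightarrow> nat) (ord :: (node \<times> node) list)
        (enc :: node \<times> node \<Rightarrow> local_info \<Rightarrow> nat) (dec :: node \<Rightarrow> local_info \<Rightarrow> nat list).
       let msgs = {w. length w = r \<and> set w \<subseteq> carrier F};
           rands = PiE V (\<lambda>u. {..<k u})
       in (\<forall>u\<in>V. 0 < k u)
        \<and> distinct ord \<and> set ord \<subseteq> E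
        \<and> (\<forall>e x. enc e x \<in> carrier F)
        \<and> (\<forall>w\<in>msgs. \<forall>\<rho>\<in>rands. \<forall>R\<in>Rs.
              dec R (local_view s R w \<rho> (exec_round s enc ord w \<rho>)) = w)
        \<and> (\<forall>v\<in>V - {s} - Rs. \<forall>w1\<in>msgs. \<forall>w2\<in>msgs. \<forall>x.
              card {\<rho>\<in>rands. adv_view s enc ord v w1 \<rho> = x}
            = card {\<rho>\<in>rands. adv_view s enc ord v w2 \<rho> = x}))"

end

theory Submission
  imports Defs "HOL-Number_Theory.Residues" "HOL-Algebra.Weak_Morphisms"
begin

text \<open>The source hides the message w, together with a uniform key k, in a polynomial P of
  degree below h: P takes the value k at one point and k + w_j at h - 1 further points.
  The receiver R0 = Rcv {1..h} draws uniform noise n_1, ..., n_h subject to n_1 + ... + n_h = 0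
  and sends n_i back to S_i through B_i and A_i, while the source sends P(i) to S_i.
  S_i forwards P(i) to A_i, and L_i(t) P(i) + n_i to every A_t with t > h, where L_i are the
  Lagrange basis polynomials of the points 1, ..., h; the noise cancels in the sum, so A_t
  obtains P(t). Every A_t relays P(t) through B_t, hence each receiver learns P at h points and
  interpolates w. An intermediate node sees one value of P, padded by the key, and noise that
  is uniform up to the zero-sum constraint: shifting the key and the noise suitably is a bijection
  of the randomness that turns its view under one message into its view under any other.\<close>

lemma exists_field_carrier_lessThan:
  "\<exists>(F :: nat ring) q. field F \<and> carrier F = {..<q} \<and> n < q"
proof -
  obtain p :: nat where p: "prime p" "n < p" using bigger_prime by blast
  interpret R: residues_prime p "residue_ring (int p)" by unfold_locales (rule p(1), simp)
  have inj: "inj_on nat (carrier (residue_ring (int p)))"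
    by (auto simp: R.res_carrier_eq inj_on_def)
  let ?F = "image_ring nat (residue_ring (int p))"
  have "carrier ?F = {..<p}"
    unfolding image_ring_carrier R.res_carrier_eq
    by (auto simp: image_iff) (metis atLeastAtMost_iff nat_int of_nat_0_le_iff of_nat_less_iff zle_diff1_eq)
  then show ?thesis using R.inj_imp_image_ring_is_field[OF inj] p by blast
qed

section \<open>Polynomial functions and Lagrange interpolation\<close>

context field
begin

text \<open>Polynomial functions of degree at most n on the carrier, characterised inductively so that
  no formal polynomial ring is needed.\<close>

inductive polyfun :: "nat \<Rightarrow> ('a \<Rightarrow> 'a) \<Rightarrow> bool" where
  polyfun_const: "c \<in> carrier R \<Longrightarrow> polyfun n (\<lambda>X. c)"
| polyfun_add: "polyfun n f \<Longrightarrow> polyfun n g \<Longrightarrow> polyfun n (\<lambda>X. f X \<oplus> g X)"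
| polyfun_smult: "polyfun n f \<Longrightarrow> c \<in> carrier R \<Longrightarrow> polyfun n (\<lambda>X. c \<otimes> f X)"
| polyfun_linear_mult: "polyfun n f \<Longrightarrow> a \<in> carrier R \<Longrightarrow> polyfun (Suc n) (\<lambda>X. (X \<ominus> a) \<otimes> f X)"
| polyfun_Suc: "polyfun n f \<Longrightarrow> polyfun (Suc n) f"
| polyfun_cong: "polyfun n f \<Longrightarrow> (\<And>X. X \<in> carrier R \<Longrightarrow> g X = f X) \<Longrightarrow> polyfun n g"

lemma polyfun_closed: "polyfun n f \<Longrightarrow> X \<in> carrier R \<Longrightarrow> f X \<in> carrier R"
  by (induction arbitrary: X rule: polyfun.induct) simp_all

lemma polyfun_mono:
  assumes "polyfun n f" "n \<le> n'"
  shows "polyfun n' f"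
  using assms(2,1) by (induction n' rule: dec_induct) (auto intro: polyfun_Suc)

lemma polyfun_0_const:
  assumes "polyfun 0 f" "X \<in> carrier R" "Y \<in> carrier R"
  shows "f X = f Y"
proof -
  have "n = 0 \<Longrightarrow> \<exists>c. \<forall>X\<in>carrier R. f X = c" if "polyfun n f" for n f
    using that by (induction rule: polyfun.induct) force+
  then show ?thesis using assms by fastforce
qed

lemma polyfun_linear_mult_factor:
  assumes "polyfun n f" "polyfun (n - 1) f'" "a \<in> carrier R" "b \<in> carrier R"
    and "\<forall>X\<in>carrier R. f X = f a \<oplus> (X \<ominus> a) \<otimes> f' X"
  shows "\<exists>g. polyfun n g \<and> (\<forall>X\<in>carrier R. (X \<ominus> b) \<otimes> f X = (a \<ominus> b) \<otimes> f a \<oplus> (X \<ominus> a) \<otimes> g X)"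
proof (intro exI conjI ballI)
  show "polyfun n (\<lambda>X. f X \<oplus> (a \<ominus> b) \<otimes> f' X)"
    using assms(1,3,4) polyfun_mono[OF assms(2)] by (intro polyfun_add polyfun_smult) auto
  fix X assume X: "X \<in> carrier R"
  have "f a \<in> carrier R" "f' X \<in> carrier R" using polyfun_closed assms(1-3) X by auto
  moreover have "f X = f a \<oplus> (X \<ominus> a) \<otimes> f' X" using assms(5) X by blast
  ultimately show "(X \<ominus> b) \<otimes> f X = (a \<ominus> b) \<otimes> f a \<oplus> (X \<ominus> a) \<otimes> (f X \<oplus> (a \<ominus> b) \<otimes> f' X)"
    using X assms(3,4) by algebra
qed

lemma polyfun_factor:
  assumes "polyfun n f" "a \<in> carrier R"
  shows "\<exists>g. polyfun (n - 1) g \<and> (\<forall>X\<in>carrier R. f X = f a \<oplus> (X \<ominus> a) \<otimes> g X)"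
  using assms(1)
proof (induction rule: polyfun.induct)
  case (polyfun_const c n)
  have "polyfun (n - 1) (\<lambda>X. \<zero>)" by (rule polyfun.polyfun_const) simp
  then show ?case using polyfun_const assms(2) by force
next
  case (polyfun_add n f g)
  obtain f' where f': "polyfun (n - 1) f'" "\<forall>X\<in>carrier R. f X = f a \<oplus> (X \<ominus> a) \<otimes> f' X"
    using polyfun_add.IH(1) by blast
  obtain g' where g': "polyfun (n - 1) g'" "\<forall>X\<in>carrier R. g X = g a \<oplus> (X \<ominus> a) \<otimes> g' X"
    using polyfun_add.IH(2) by blast
  have "f X \<oplus> g X = f a \<oplus> g a \<oplus> (X \<ominus> a) \<otimes> (f' X \<oplus> g' X)" if X: "X \<in> carrier R" for X
  proof -
    have "f a \<in> carrier R" "g a \<in> carrier R" "f' X \<in> carrier R" "g' X \<in> carrier R"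
      using polyfun_closed polyfun_add.hyps f'(1) g'(1) X assms(2) by auto
    moreover have "f X = f a \<oplus> (X \<ominus> a) \<otimes> f' X" "g X = g a \<oplus> (X \<ominus> a) \<otimes> g' X"
      using f'(2) g'(2) X by blast+
    ultimately show ?thesis using X assms(2) by algebra
  qed
  then show ?case using polyfun.polyfun_add[OF f'(1) g'(1)] by blast
next
  case (polyfun_smult n f c)
  obtain f' where f': "polyfun (n - 1) f'" "\<forall>X\<in>carrier R. f X = f a \<oplus> (X \<ominus> a) \<otimes> f' X"
    using polyfun_smult.IH by blast
  have "c \<otimes> f X = c \<otimes> f a \<oplus> (X \<ominus> a) \<otimes> (c \<otimes> f' X)" if X: "X \<in> carrier R" for X
  proof -
    have "f a \<in> carrier R" "f' X \<in> carrier R"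
      using polyfun_closed polyfun_smult.hyps f'(1) X assms(2) by auto
    moreover have "f X = f a \<oplus> (X \<ominus> a) \<otimes> f' X" using f'(2) X by blast
    ultimately show ?thesis using X assms(2) polyfun_smult.hyps(2) by algebra
  qed
  then show ?case using polyfun.polyfun_smult[OF f'(1) polyfun_smult.hyps(2)] by blast
next
  case (polyfun_linear_mult n f b)
  then obtain f' where "polyfun (n - 1) f'" "\<forall>X\<in>carrier R. f X = f a \<oplus> (X \<ominus> a) \<otimes> f' X"
    by blast
  then show ?case
    using polyfun_linear_mult_factor[OF polyfun_linear_mult.hyps(1) _ assms(2) polyfun_linear_mult.hyps(2)]
    by simp
next
  case (polyfun_Suc n f)
  then show ?case using polyfun_mono[of "n - 1" _ "Suc n - 1"] by force
next
  case (polyfun_cong n f g)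
  then show ?case using assms(2) by metis
qed

lemma polyfun_diff:
  assumes "polyfun n f" "polyfun n g"
  shows "polyfun n (\<lambda>X. f X \<ominus> g X)"
proof -
  have "polyfun n (\<lambda>X. f X \<oplus> (\<ominus> \<one>) \<otimes> g X)"
    using assms by (intro polyfun_add polyfun_smult) auto
  then show ?thesis
  proof (rule polyfun_cong)
    fix X assume "X \<in> carrier R"
    then have "f X \<in> carrier R" "g X \<in> carrier R" using assms polyfun_closed by blast+
    then show "f X \<ominus> g X = f X \<oplus> (\<ominus> \<one>) \<otimes> g X" by (simp add: l_minus minus_eq)
  qed
qed

lemma polyfun_eq_zero_if_roots:
  assumes "polyfun n f" "finite Z" "Z \<subseteq> carrier R" "n < card Z" "\<forall>z\<in>Z. f z = \<zero>"
    and "X \<in> carrier R"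
  shows "f X = \<zero>"
  using assms
proof (induction n arbitrary: f Z)
  case 0
  then obtain z where "z \<in> Z" by fastforce
  then show ?case using polyfun_0_const[OF 0(1) 0(6), of z] 0 by auto
next
  case (Suc n)
  then obtain z where z: "z \<in> Z" "z \<in> carrier R" by (metis card.empty ex_in_conv not_less0 subsetD)
  obtain g where g: "polyfun n g" "\<forall>X\<in>carrier R. f X = f z \<oplus> (X \<ominus> z) \<otimes> g X"
    using polyfun_factor[OF Suc.prems(1) z(2)] by auto
  have fz: "f z = \<zero>" using Suc.prems z by auto
  have "g y = \<zero>" if y: "y \<in> Z - {z}" for y
  proof -
    have yc: "y \<in> carrier R" using y Suc.prems by auto
    have "(y \<ominus> z) \<otimes> g y = \<zero>"
      using g(2) yc Suc.prems(5) y fz polyfun_closed[OF g(1) yc] z(2) by force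
    moreover have "y \<ominus> z \<noteq> \<zero>" using y yc z(2) by simp
    ultimately show ?thesis using integral_iff polyfun_closed[OF g(1) yc] yc z(2) by simp
  qed
  moreover have "n < card (Z - {z})" using Suc.prems(2,4) z(1) by simp
  ultimately have "g X = \<zero>"
    using Suc.IH[OF g(1), of "Z - {z}"] Suc.prems by auto
  then show ?case using g(2) fz z(2) Suc.prems(6) by simp
qed

lemma polyfun_finsum:
  assumes "finite I" "\<And>i. i \<in> I \<Longrightarrow> polyfun n (f i)"
  shows "polyfun n (\<lambda>X. \<Oplus>i\<in>I. f i X)"
  using assms
proof (induction I rule: finite_induct)
  case empty
  show ?case by (rule polyfun_cong[OF polyfun_const[OF zero_closed]]) simp
next
  case (insert x F)
  have "polyfun n (\<lambda>X. f x X \<oplus> (\<Oplus>i\<in>F. f i X))"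
    using insert by (intro polyfun_add) auto
  then show ?case
  proof (rule polyfun_cong)
    fix X assume "X \<in> carrier R"
    then have "(\<lambda>i. f i X) \<in> insert x F \<rightarrow> carrier R"
      using insert.prems polyfun_closed by blast
    then show "(\<Oplus>i\<in>insert x F. f i X) = f x X \<oplus> (\<Oplus>i\<in>F. f i X)"
      using insert.hyps by (subst finsum_insert) auto
  qed
qed

lemma polyfun_finprod_linear:
  assumes "finite S" "\<And>l. l \<in> S \<Longrightarrow> b l \<in> carrier R" "\<And>l. l \<in> S \<Longrightarrow> d l \<in> carrier R"
  shows "polyfun (card S) (\<lambda>X. \<Otimes>l\<in>S. (X \<ominus> b l) \<otimes> d l)"
  using assms
proof (induction S rule: finite_induct)
  case empty
  show ?case by (rule polyfun_cong[OF polyfun_const[OF one_closed]]) simp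
next
  case (insert x F)
  have "polyfun (Suc (card F)) (\<lambda>X. (X \<ominus> b x) \<otimes> (d x \<otimes> (\<Otimes>l\<in>F. (X \<ominus> b l) \<otimes> d l)))"
    using insert by (intro polyfun_linear_mult polyfun_smult) auto
  then have "polyfun (Suc (card F)) (\<lambda>X. \<Otimes>l\<in>insert x F. (X \<ominus> b l) \<otimes> d l)"
  proof (rule polyfun_cong)
    fix X assume "X \<in> carrier R"
    then have "(\<lambda>l. (X \<ominus> b l) \<otimes> d l) \<in> insert x F \<rightarrow> carrier R"
      using insert.prems by auto
    then have "(\<Otimes>l\<in>insert x F. (X \<ominus> b l) \<otimes> d l) = ((X \<ominus> b x) \<otimes> d x) \<otimes> (\<Otimes>l\<in>F. (X \<ominus> b l) \<otimes> d l)"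
      using insert.hyps by (subst finprod_insert) auto
    then show "(\<Otimes>l\<in>insert x F. (X \<ominus> b l) \<otimes> d l) = (X \<ominus> b x) \<otimes> (d x \<otimes> (\<Otimes>l\<in>F. (X \<ominus> b l) \<otimes> d l))"
      using insert.prems \<open>X \<in> carrier R\<close> by (simp add: m_assoc)
  qed
  then show ?case using insert.hyps by simp
qed

lemma finprod_eq_zero:
  assumes "finite A" "i \<in> A" "f \<in> A \<rightarrow> carrier R" "f i = \<zero>"
  shows "finprod R f A = \<zero>"
proof -
  have "finprod R f A = finprod R f (insert i (A - {i}))"
    using assms(2) by (simp add: insert_absorb)
  also have "\<dots> = f i \<otimes> finprod R f (A - {i})"
    using assms by (subst finprod_insert) auto
  finally have "finprod R f A = f i \<otimes> finprod R f (A - {i})" .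
  moreover have "finprod R f (A - {i}) \<in> carrier R" using assms(3) by (intro finprod_closed) auto
  ultimately show ?thesis using assms(4) by simp
qed

definition lagrange_basis :: "'a set \<Rightarrow> 'a \<Rightarrow> 'a \<Rightarrow> 'a" where
  "lagrange_basis I i X = (\<Otimes>l\<in>I - {i}. (X \<ominus> l) \<otimes> inv (i \<ominus> l))"

definition interpolant :: "'a set \<Rightarrow> ('a \<Rightarrow> 'a) \<Rightarrow> 'a \<Rightarrow> 'a" where
  "interpolant I c X = (\<Oplus>i\<in>I. c i \<otimes> lagrange_basis I i X)"

lemma inv_minus:
  assumes "i \<in> carrier R" "l \<in> carrier R" "i \<noteq> l"
  shows "inv (i \<ominus> l) \<in> carrier R" "(i \<ominus> l) \<otimes> inv (i \<ominus> l) = \<one>"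
proof -
  have "i \<ominus> l \<in> Units R" using assms field_Units r_right_minus_eq by auto
  then show "inv (i \<ominus> l) \<in> carrier R" "(i \<ominus> l) \<otimes> inv (i \<ominus> l) = \<one>" by auto
qed

context
  fixes I :: "'a set"
  assumes I: "finite I" "I \<subseteq> carrier R"
begin

lemma lagrange_basis_polyfun:
  assumes "i \<in> I"
  shows "polyfun (card I - 1) (lagrange_basis I i)"
proof -
  have "polyfun (card (I - {i})) (lagrange_basis I i)"
    unfolding lagrange_basis_def[abs_def] using I assms
    by (intro polyfun_finprod_linear) (auto intro!: inv_minus(1))
  then show ?thesis using I assms by simp
qed

lemma lagrange_basis_closed: "i \<in> I \<Longrightarrow> X \<in> carrier R \<Longrightarrow> lagrange_basis I i X \<in> carrier R"
  using polyfun_closed[OF lagrange_basis_polyfun] .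

lemma lagrange_basis_at:
  assumes "i \<in> I" "t \<in> I"
  shows "lagrange_basis I i t = (if t = i then \<one> else \<zero>)"
proof (cases "t = i")
  case True
  have "lagrange_basis I i t = (\<Otimes>l\<in>I - {i}. \<one>)"
    unfolding lagrange_basis_def using I assms True
    by (intro finprod_cong') (auto simp: Pi_def subset_eq inv_minus)
  then show ?thesis using True by simp
next
  case False
  have tt: "t \<ominus> t = \<zero>" and "inv (i \<ominus> t) \<in> carrier R"
    using I assms False inv_minus by (auto simp: subset_eq)
  then have "lagrange_basis I i t = \<zero>"
    unfolding lagrange_basis_def using I assms False
    by (intro finprod_eq_zero[of _ t]) (auto simp: Pi_def subset_eq inv_minus tt)
  then show ?thesis using False by simp
qed

lemma interpolant_polyfun:
  assumes "\<And>i. i \<in> I \<Longrightarrow> c i \<in> carrier R"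
  shows "polyfun (card I - 1) (interpolant I c)"
  unfolding interpolant_def[abs_def] using I assms
  by (intro polyfun_finsum polyfun_smult lagrange_basis_polyfun) auto

lemma interpolant_at:
  assumes "\<And>i. i \<in> I \<Longrightarrow> c i \<in> carrier R" "t \<in> I"
  shows "interpolant I c t = c t"
proof -
  have "interpolant I c t = (\<Oplus>i\<in>I. if t = i then c i else \<zero>)"
    unfolding interpolant_def using assms lagrange_basis_at by (intro finsum_cong') auto
  also have "\<dots> = c t" using I assms by (intro finsum_singleton) auto
  finally show ?thesis .
qed

lemma lagrange_interpolation:
  assumes "polyfun (card I - 1) f" "I \<noteq> {}" "\<And>i. i \<in> I \<Longrightarrow> c i = f i" "X \<in> carrier R"
  shows "interpolant I c X = f X"
proof -
  have c: "c i \<in> carrier R" if "i \<in> I" for i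
    using that assms polyfun_closed I by auto
  let ?D = "\<lambda>X. interpolant I c X \<ominus> f X"
  have "polyfun (card I - 1) ?D"
    using interpolant_polyfun[OF c] assms(1) by (rule polyfun_diff)
  moreover have "\<forall>z\<in>I. ?D z = \<zero>"
  proof
    fix z assume "z \<in> I"
    then have "interpolant I c z = f z" "f z \<in> carrier R"
      using interpolant_at[OF c] assms(3) c by auto
    then show "?D z = \<zero>" using r_right_minus_eq by metis
  qed
  ultimately have "?D X = \<zero>"
    using I assms(2,4) by (intro polyfun_eq_zero_if_roots[of "card I - 1" _ I]) (auto simp: card_gt_0_iff)
  moreover have "interpolant I c X \<in> carrier R" "f X \<in> carrier R"
    using polyfun_closed[OF interpolant_polyfun[OF c]] polyfun_closed[OF assms(1)] assms(4) by auto
  ultimately show ?thesis using r_right_minus_eq by blast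
qed

end

end

section \<open>Executing a round in causal blocks\<close>

lemma run_edges_append:
  "run_edges s enc (xs @ ys) w \<rho> V = run_edges s enc ys w \<rho> (run_edges s enc xs w \<rho> V)"
  by (induction xs arbitrary: V) auto

context
  fixes s :: node and enc :: "node \<times> node \<Rightarrow> local_info \<Rightarrow> nat"
    and w :: "nat list" and \<rho> :: "node \<Rightarrow> nat" and val :: "node \<times> node \<Rightarrow> nat"
begin

definition determined_by :: "(node \<times> node) set \<Rightarrow> node \<times> node \<Rightarrow> bool" where
  "determined_by D e \<longleftrightarrow>
     (\<forall>V. (\<forall>e'\<in>D. V e' = Some (val e')) \<longrightarrow> enc e (local_view s (fst e) w \<rho> V) = val e)"

fun causal_blocks :: "(node \<times> node) set \<Rightarrow> (node \<times> node) list list \<Rightarrow> bool" where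
  "causal_blocks D [] = True"
| "causal_blocks D (b # bs) \<longleftrightarrow> (\<forall>e\<in>set b. determined_by D e) \<and> causal_blocks (D \<union> set b) bs"

lemma run_edges_block:
  assumes "\<forall>e\<in>set b. determined_by D e" "\<forall>e\<in>D. V e = Some (val e)"
  shows "run_edges s enc b w \<rho> V = (\<lambda>e. if e \<in> set b then Some (val e) else V e)"
  using assms
proof (induction b arbitrary: V)
  case (Cons x b)
  have "enc x (local_view s (fst x) w \<rho> V) = val x"
    using Cons.prems unfolding determined_by_def by simp
  moreover have "\<forall>e\<in>D. (V(x := Some (val x))) e = Some (val e)" using Cons.prems(2) by simp
  ultimately show ?case using Cons by (auto simp: fun_eq_iff)
qed simp

lemma run_edges_causal_blocks:
  assumes "causal_blocks D bs" "\<forall>e\<in>D. V e = Some (val e)"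
  shows "run_edges s enc (concat bs) w \<rho> V = (\<lambda>e. if e \<in> set (concat bs) then Some (val e) else V e)"
  using assms
proof (induction bs arbitrary: D V)
  case (Cons b bs)
  let ?V = "run_edges s enc b w \<rho> V"
  have V: "?V = (\<lambda>e. if e \<in> set b then Some (val e) else V e)"
    using run_edges_block[of b D V] Cons.prems by simp
  then have "\<forall>e\<in>D \<union> set b. ?V e = Some (val e)" using Cons.prems(2) by auto
  then have "run_edges s enc (concat bs) w \<rho> ?V = (\<lambda>e. if e \<in> set (concat bs) then Some (val e) else ?V e)"
    using Cons.IH[of "D \<union> set b" ?V] Cons.prems(1) by simp
  then have "run_edges s enc (concat (b # bs)) w \<rho> V = (\<lambda>e. if e \<in> set (concat bs) then Some (val e) else ?V e)"
    by (simp add: run_edges_append)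
  then show ?case unfolding V by auto
qed simp

lemma exec_round_causal_blocks:
  assumes "causal_blocks {} bs"
  shows "exec_round s enc (concat bs) w \<rho> = (\<lambda>e. if e \<in> set (concat bs) then Some (val e) else None)"
  unfolding exec_round_def using run_edges_causal_blocks[OF assms] by simp

end

lemma card_fibres_eq_if_inj:
  assumes "finite A" "inj_on \<phi> A" "\<phi> ` A \<subseteq> A" "\<forall>x\<in>A. g (\<phi> x) = f x"
  shows "card {x\<in>A. f x = y} = card {x\<in>A. g x = y}"
proof -
  have surj: "\<phi> ` A = A" using endo_inj_surj assms(1-3) by blast
  have image: "\<phi> ` {x\<in>A. f x = y} = {x\<in>A. g x = y}"
  proof (intro equalityI subsetI)
    fix x assume "x \<in> \<phi> ` {x\<in>A. f x = y}"
    then obtain x' where "x' \<in> A" "f x' = y" "x = \<phi> x'" by blast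
    then show "x \<in> {x\<in>A. g x = y}" using assms(3,4) by blast
  next
    fix x assume x: "x \<in> {x\<in>A. g x = y}"
    then obtain x' where x': "x' \<in> A" "x = \<phi> x'" using surj by blast
    then have "f x' = y" using x assms(4) by auto
    then show "x \<in> \<phi> ` {x\<in>A. f x = y}" using x' by blast
  qed
  have "inj_on \<phi> {x\<in>A. f x = y}" using assms(2) by (rule inj_on_subset) blast
  then show ?thesis using card_image image by fastforce
qed

definition list_of_set :: "'a set \<Rightarrow> 'a list" where
  "list_of_set X = (SOME xs. distinct xs \<and> set xs = X)"

lemma list_of_set: "finite X \<Longrightarrow> distinct (list_of_set X) \<and> set (list_of_set X) = X"
  unfolding list_of_set_def by (rule someI_ex) (metis finite_distinct_list)

section \<open>The scheme on the bidirected combination network\<close>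

text \<open>The field elements are the numbers below q, so the indices 1, ..., m + h of the network
  serve directly as distinct evaluation points.\<close>

locale ccn_scheme = field F for F :: "nat ring" (structure) +
  fixes m h q :: nat
  assumes carrier_eq: "carrier F = {..<q}" and points_lt: "m + h < q"
    and h_pos: "0 < h" and h_le_m: "h \<le> m"
begin

lemma point_closed: "t \<le> m + h \<Longrightarrow> t \<in> carrier F"
  using carrier_eq points_lt by simp

definition msgs :: "nat list set" where
  "msgs = {w. length w = h - 1 \<and> set w \<subseteq> carrier F}"

text \<open>Share t of message w under key k is the value at t of the polynomial of degree below h
  taking the value k at the point m + h and k + w!j at the point m + 1 + j.\<close>

definition msg_points :: "nat set" where
  "msg_points = {Suc m..m + h}"

definition msg_coeff :: "nat list \<Rightarrow> nat \<Rightarrow> nat" where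
  "msg_coeff w x = (if x < m + h then w ! (x - Suc m) else \<zero>)"

definition msg_part :: "nat list \<Rightarrow> nat \<Rightarrow> nat" where
  "msg_part w = interpolant msg_points (msg_coeff w)"

definition share :: "nat list \<Rightarrow> nat \<Rightarrow> nat \<Rightarrow> nat" where
  "share w k t = k \<oplus> msg_part w t"

lemma msg_points: "finite msg_points" "msg_points \<subseteq> carrier F" "card msg_points = h"
  unfolding msg_points_def using point_closed by auto

lemma msg_coeff_closed:
  assumes "w \<in> msgs" "x \<in> msg_points"
  shows "msg_coeff w x \<in> carrier F"
proof -
  have "x < m + h \<Longrightarrow> w ! (x - Suc m) \<in> set w"
    using assms unfolding msgs_def msg_points_def by (intro nth_mem) auto
  then show ?thesis using assms unfolding msgs_def msg_coeff_def by auto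
qed

lemma msg_part_polyfun: "w \<in> msgs \<Longrightarrow> polyfun (h - 1) (msg_part w)"
  unfolding msg_part_def
  using interpolant_polyfun[OF msg_points(1,2) msg_coeff_closed] msg_points(3) by auto

lemma msg_part_closed: "w \<in> msgs \<Longrightarrow> t \<le> m + h \<Longrightarrow> msg_part w t \<in> carrier F"
  using polyfun_closed[OF msg_part_polyfun] point_closed by blast

lemma share_polyfun: "w \<in> msgs \<Longrightarrow> k \<in> carrier F \<Longrightarrow> polyfun (h - 1) (share w k)"
  unfolding share_def[abs_def] by (intro polyfun_add polyfun_const msg_part_polyfun)

lemma share_closed: "w \<in> msgs \<Longrightarrow> k \<in> carrier F \<Longrightarrow> t \<le> m + h \<Longrightarrow> share w k t \<in> carrier F"
  unfolding share_def using msg_part_closed by blast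

lemma share_at_key_point:
  assumes "w \<in> msgs" "k \<in> carrier F"
  shows "share w k (m + h) = k"
proof -
  have "m + h \<in> msg_points" unfolding msg_points_def using h_pos by simp
  then show ?thesis
    unfolding share_def msg_part_def using assms
    by (subst interpolant_at[OF msg_points(1,2) msg_coeff_closed]) (auto simp: msg_coeff_def)
qed

lemma share_at_msg_point:
  assumes "w \<in> msgs" "k \<in> carrier F" "j < h - 1"
  shows "share w k (Suc m + j) = k \<oplus> w ! j"
proof -
  have "Suc m + j \<in> msg_points" unfolding msg_points_def using assms(3) by simp
  then show ?thesis
    unfolding share_def msg_part_def using assms
    by (subst interpolant_at[OF msg_points(1,2) msg_coeff_closed]) (auto simp: msg_coeff_def)
qed

lemma interpolant_share:
  assumes "w \<in> msgs" "k \<in> carrier F" "t \<le> m + h"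
  shows "interpolant {1..h} (share w k) t = share w k t"
  using assms share_polyfun h_pos point_closed h_le_m
  by (intro lagrange_interpolation) (auto simp: subset_eq)

definition R0 :: node where
  "R0 = Rcv {1..h}"

text \<open>The receiver R0 draws the zero-sum noise vector; as the randomness of a node is a number
  below a bound, the vector is obtained through a fixed enumeration of noise_vectors.\<close>

definition noise_vectors :: "(nat \<Rightarrow> nat) set" where
  "noise_vectors = {n \<in> {1..h} \<rightarrow>\<^sub>E carrier F. finsum F n {1..h} = \<zero>}"

definition noise_enum :: "nat \<Rightarrow> nat \<Rightarrow> nat" where
  "noise_enum = (SOME f. bij_betw f {..<card noise_vectors} noise_vectors)"

definition noise :: "(node \<Rightarrow> nat) \<Rightarrow> nat \<Rightarrow> nat" where
  "noise \<rho> = noise_enum (\<rho> R0)"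

definition rand_bound :: "node \<Rightarrow> nat" where
  "rand_bound u = (if u = Src then q else if u = R0 then card noise_vectors else 1)"

definition rands :: "(node \<Rightarrow> nat) set" where
  "rands = (\<Pi>\<^sub>E u\<in>ccn_nodes m h. {..<rand_bound u})"

lemma noise_vectors_PiE: "n \<in> noise_vectors \<Longrightarrow> n \<in> {1..h} \<rightarrow>\<^sub>E carrier F"
  unfolding noise_vectors_def by blast

lemma noise_vectors_closed: "n \<in> noise_vectors \<Longrightarrow> i \<in> {1..h} \<Longrightarrow> n i \<in> carrier F"
  using noise_vectors_PiE by (blast intro: PiE_mem)

lemma finite_noise_vectors: "finite noise_vectors"
proof -
  have "finite ({1..h} \<rightarrow>\<^sub>E carrier F)" unfolding carrier_eq by (intro finite_PiE) auto
  then show ?thesis unfolding noise_vectors_def by simp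
qed

lemma zero_in_noise_vectors: "(\<lambda>i\<in>{1..h}. \<zero>) \<in> noise_vectors"
proof -
  have "finsum F (\<lambda>i\<in>{1..h}. \<zero>) {1..h} = finsum F (\<lambda>i. \<zero>) {1..h}"
    by (intro finsum_cong') auto
  then show ?thesis unfolding noise_vectors_def by auto
qed

lemma bij_noise_enum: "bij_betw noise_enum {..<card noise_vectors} noise_vectors"
proof -
  have "\<exists>f. bij_betw f {..<card noise_vectors} noise_vectors"
    using ex_bij_betw_nat_finite[OF finite_noise_vectors] by (simp add: lessThan_atLeast0)
  then show ?thesis unfolding noise_enum_def by (rule someI_ex)
qed

lemma R0_in_nodes: "R0 \<in> ccn_nodes m h"
  unfolding R0_def ccn_nodes_def ccn_receivers_def using h_le_m by auto

lemma rand_Src: "\<rho> \<in> rands \<Longrightarrow> \<rho> Src \<in> carrier F"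
  unfolding rands_def carrier_eq by (auto simp: PiE_iff rand_bound_def ccn_nodes_def)

lemma rand_R0: "\<rho> \<in> rands \<Longrightarrow> \<rho> R0 < card noise_vectors"
  using R0_in_nodes unfolding rands_def rand_bound_def R0_def by (auto simp: PiE_iff)

lemma noise_in_noise_vectors: "\<rho> \<in> rands \<Longrightarrow> noise \<rho> \<in> noise_vectors"
  unfolding noise_def using bij_noise_enum rand_R0 by (auto simp: bij_betw_def)

lemma noise_closed: "\<rho> \<in> rands \<Longrightarrow> i \<in> {1..h} \<Longrightarrow> noise \<rho> i \<in> carrier F"
  using noise_in_noise_vectors noise_vectors_closed by blast

lemma noise_sum: "\<rho> \<in> rands \<Longrightarrow> finsum F (noise \<rho>) {1..h} = \<zero>"
  using noise_in_noise_vectors unfolding noise_vectors_def by auto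

fun transmit :: "node \<times> node \<Rightarrow> local_info \<Rightarrow> nat" where
  "transmit (Rcv T, BB i) (_, r, _) = noise_enum r i"
| "transmit (BB i, AA j) (_, _, inc) = the (inc (R0, BB i))"
| "transmit (AA i, SS j) (_, _, inc) = the (inc (BB i, AA i))"
| "transmit (Src, SS i) (mw, r, _) = share (the mw) r i"
| "transmit (SS i, AA j) (_, _, inc) =
     (if j = i then the (inc (Src, SS i))
      else the (inc (Src, SS i)) \<otimes> lagrange_basis {1..h} i j \<oplus> the (inc (AA i, SS i)))"
| "transmit (AA t, BB j) (_, _, inc) =
     (if t \<le> h then the (inc (SS t, AA t)) else (\<Oplus>i\<in>{1..h}. the (inc (SS i, AA t))))"
| "transmit (BB t, Rcv T) (_, _, inc) = the (inc (AA t, BB t))"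
| "transmit _ _ = \<zero>"

text \<open>Encoders must output field elements on every input, including local views that never
  occur in a run, so transmit is clamped to the carrier.\<close>

definition protocol_enc :: "node \<times> node \<Rightarrow> local_info \<Rightarrow> nat" where
  "protocol_enc e x = (if transmit e x \<in> carrier F then transmit e x else \<zero>)"

fun edge_val :: "nat list \<Rightarrow> (node \<Rightarrow> nat) \<Rightarrow> node \<times> node \<Rightarrow> nat" where
  "edge_val w \<rho> (Rcv T, BB i) = noise \<rho> i"
| "edge_val w \<rho> (BB i, AA j) = noise \<rho> i"
| "edge_val w \<rho> (AA i, SS j) = noise \<rho> i"
| "edge_val w \<rho> (Src, SS i) = share w (\<rho> Src) i"
| "edge_val w \<rho> (SS i, AA j) =
     (if j = i then share w (\<rho> Src) i
      else share w (\<rho> Src) i \<otimes> lagrange_basis {1..h} i j \<oplus> noise \<rho> i)"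
| "edge_val w \<rho> (AA t, BB j) = share w (\<rho> Src) t"
| "edge_val w \<rho> (BB t, Rcv T) = share w (\<rho> Src) t"
| "edge_val w \<rho> _ = \<zero>"

definition edges_R0_B :: "(node \<times> node) set" where
  "edges_R0_B = (\<lambda>i. (R0, BB i)) ` {1..h}"
definition edges_B_A :: "(node \<times> node) set" where
  "edges_B_A = (\<lambda>i. (BB i, AA i)) ` {1..h}"
definition edges_A_S :: "(node \<times> node) set" where
  "edges_A_S = (\<lambda>i. (AA i, SS i)) ` {1..h}"
definition edges_Src_S :: "(node \<times> node) set" where
  "edges_Src_S = (\<lambda>i. (Src, SS i)) ` {1..h}"
definition edges_S_A :: "(node \<times> node) set" where
  "edges_S_A = {(SS i, AA j) | i j. i \<in> {1..h} \<and> (j = i \<or> h < j \<and> j \<le> m)}"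
definition edges_A_B :: "(node \<times> node) set" where
  "edges_A_B = (\<lambda>t. (AA t, BB t)) ` {1..m}"
definition edges_B_Rcv :: "(node \<times> node) set" where
  "edges_B_Rcv = {(BB t, Rcv T) | t T. T \<subseteq> {1..m} \<and> card T = h \<and> t \<in> T}"

lemmas edges_defs = edges_R0_B_def edges_B_A_def edges_A_S_def edges_Src_S_def edges_S_A_def
  edges_A_B_def edges_B_Rcv_def

definition edge_blocks :: "(node \<times> node) set list" where
  "edge_blocks = [edges_R0_B, edges_B_A, edges_A_S, edges_Src_S, edges_S_A, edges_A_B, edges_B_Rcv]"

definition schedule :: "(node \<times> node) list" where
  "schedule = concat (map list_of_set edge_blocks)"

abbreviation used_edges :: "(node \<times> node) set" where
  "used_edges \<equiv> \<Union> (set edge_blocks)"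

lemma finite_edge_blocks: "X \<in> set edge_blocks \<Longrightarrow> finite X"
proof -
  have "edges_S_A \<subseteq> (\<lambda>(i, j). (SS i, AA j)) ` ({1..h} \<times> {1..m})"
    unfolding edges_S_A_def using h_le_m by auto
  moreover have "edges_B_Rcv \<subseteq> (\<lambda>(t, T). (BB t, Rcv T)) ` ({1..m} \<times> Pow {1..m})"
    unfolding edges_B_Rcv_def by auto
  ultimately have "finite edges_S_A" "finite edges_B_Rcv"
    by (auto elim: finite_subset)
  then show "X \<in> set edge_blocks \<Longrightarrow> finite X"
    unfolding edge_blocks_def by (auto simp: edges_R0_B_def edges_B_A_def edges_A_S_def
        edges_Src_S_def edges_A_B_def)
qed

lemma set_schedule: "set schedule = used_edges"
  unfolding schedule_def using list_of_set finite_edge_blocks by auto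

lemma distinct_schedule: "distinct schedule"
proof -
  have "\<forall>X\<in>set edge_blocks. distinct (list_of_set X) \<and> set (list_of_set X) = X"
    using list_of_set finite_edge_blocks by blast
  moreover have
    "edges_R0_B \<inter> (edges_B_A \<union> (edges_A_S \<union> (edges_Src_S \<union> (edges_S_A \<union> (edges_A_B \<union> edges_B_Rcv))))) = {}"
    "edges_B_A \<inter> (edges_A_S \<union> (edges_Src_S \<union> (edges_S_A \<union> (edges_A_B \<union> edges_B_Rcv)))) = {}"
    "edges_A_S \<inter> (edges_Src_S \<union> (edges_S_A \<union> (edges_A_B \<union> edges_B_Rcv))) = {}"
    "edges_Src_S \<inter> (edges_S_A \<union> (edges_A_B \<union> edges_B_Rcv)) = {}"
    "edges_S_A \<inter> (edges_A_B \<union> edges_B_Rcv) = {}"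
    "edges_A_B \<inter> edges_B_Rcv = {}"
    by (auto simp: edges_defs R0_def)
  ultimately show ?thesis unfolding schedule_def edge_blocks_def by (simp add: distinct_append)
qed

lemma schedule_edges: "set schedule \<subseteq> bidir_ccn_edges m h"
proof -
  have "edges_Src_S \<union> edges_S_A \<union> edges_A_B \<union> edges_B_Rcv \<subseteq> dir_ccn_edges m h"
    unfolding dir_ccn_edges_def edges_Src_S_def edges_S_A_def edges_A_B_def edges_B_Rcv_def
    by auto
  moreover have "prod.swap ` (edges_R0_B \<union> edges_B_A \<union> edges_A_S) \<subseteq> dir_ccn_edges m h"
    unfolding dir_ccn_edges_def edges_R0_B_def edges_B_A_def edges_A_S_def R0_def
    using h_le_m by auto
  ultimately show ?thesis
    unfolding set_schedule edge_blocks_def bidir_ccn_edges_def by force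
qed

lemma used_edgesE:
  assumes "e \<in> used_edges"
  obtains (R0_B) i where "i \<in> {1..h}" "e = (R0, BB i)"
  | (B_A) i where "i \<in> {1..h}" "e = (BB i, AA i)"
  | (A_S) i where "i \<in> {1..h}" "e = (AA i, SS i)"
  | (Src_S) i where "i \<in> {1..h}" "e = (Src, SS i)"
  | (S_A) i where "i \<in> {1..h}" "e = (SS i, AA i)"
  | (S_A_masked) i j where "i \<in> {1..h}" "h < j" "j \<le> m" "e = (SS i, AA j)"
  | (A_B) t where "t \<in> {1..m}" "e = (AA t, BB t)"
  | (B_Rcv) t T where "T \<subseteq> {1..m}" "card T = h" "t \<in> T" "e = (BB t, Rcv T)"
proof -
  have "e \<in> edges_R0_B \<or> e \<in> edges_B_A \<or> e \<in> edges_A_S \<or> e \<in> edges_Src_S \<or>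
      e \<in> edges_S_A \<or> e \<in> edges_A_B \<or> e \<in> edges_B_Rcv"
    using assms unfolding edge_blocks_def by simp
  then show thesis
    unfolding edges_defs by (elim disjE imageE CollectE exE conjE) (simp_all add: that)
qed

lemma lagrange_coeff_closed:
  "i \<in> {1..h} \<Longrightarrow> t \<le> m + h \<Longrightarrow> lagrange_basis {1..h} i t \<in> carrier F"
  using lagrange_basis_closed[of "{1..h}" i t] point_closed by (simp add: subset_eq)

lemma edge_val_closed:
  assumes "w \<in> msgs" "\<rho> \<in> rands" "e \<in> used_edges"
  shows "edge_val w \<rho> e \<in> carrier F"
proof -
  have share: "share w (\<rho> Src) t \<in> carrier F" if "t \<le> m" for t
    using share_closed[OF assms(1) rand_Src[OF assms(2)]] that by simp
  from assms(3) show ?thesis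
  proof (cases rule: used_edgesE)
    case (S_A_masked i j)
    then show ?thesis
      using share[of i] lagrange_coeff_closed[of i j] noise_closed[OF assms(2), of i] h_le_m by simp
  qed (use share noise_closed[OF assms(2)] h_le_m in \<open>auto simp: R0_def\<close>)
qed

lemma determined_by_transmit:
  assumes "w \<in> msgs" "\<rho> \<in> rands" "e \<in> used_edges" "D' \<subseteq> D"
    and "\<And>V. \<forall>e'\<in>D'. V e' = Some (edge_val w \<rho> e') \<Longrightarrow>
           transmit e (local_view Src (fst e) w \<rho> V) = edge_val w \<rho> e"
  shows "determined_by Src protocol_enc w \<rho> (edge_val w \<rho>) D e"
  unfolding determined_by_def protocol_enc_def
  using assms(4,5) edge_val_closed[OF assms(1-3)] by (metis subsetD)

context
  fixes w :: "nat list" and \<rho> :: "node \<Rightarrow> nat" and V :: "node \<times> node \<Rightarrow> nat option"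
begin

lemma transmit_R0_B: "e \<in> edges_R0_B \<Longrightarrow> transmit e (local_view Src (fst e) w \<rho> V) = edge_val w \<rho> e"
  unfolding edges_R0_B_def by (auto simp: R0_def local_view_def noise_def)

lemma transmit_B_A:
  "e \<in> edges_B_A \<Longrightarrow> \<forall>e'\<in>edges_R0_B. V e' = Some (edge_val w \<rho> e') \<Longrightarrow>
   transmit e (local_view Src (fst e) w \<rho> V) = edge_val w \<rho> e"
  unfolding edges_B_A_def edges_R0_B_def by (auto simp: local_view_def R0_def)

lemma transmit_A_S:
  "e \<in> edges_A_S \<Longrightarrow> \<forall>e'\<in>edges_B_A. V e' = Some (edge_val w \<rho> e') \<Longrightarrow>
   transmit e (local_view Src (fst e) w \<rho> V) = edge_val w \<rho> e"
  unfolding edges_A_S_def edges_B_A_def by (auto simp: local_view_def)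

lemma transmit_Src_S: "e \<in> edges_Src_S \<Longrightarrow> transmit e (local_view Src (fst e) w \<rho> V) = edge_val w \<rho> e"
  unfolding edges_Src_S_def by (auto simp: local_view_def)

lemma transmit_S_A:
  assumes "e \<in> edges_S_A" "\<forall>e'\<in>edges_A_S \<union> edges_Src_S. V e' = Some (edge_val w \<rho> e')"
  shows "transmit e (local_view Src (fst e) w \<rho> V) = edge_val w \<rho> e"
proof -
  obtain i j where "i \<in> {1..h}" "e = (SS i, AA j)" using assms(1) unfolding edges_S_A_def by blast
  moreover have "V (AA i, SS i) = Some (noise \<rho> i)" "V (Src, SS i) = Some (share w (\<rho> Src) i)"
    if "i \<in> {1..h}" for i
    using assms(2) that unfolding edges_A_S_def edges_Src_S_def by auto
  ultimately show ?thesis by (simp add: local_view_def)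
qed

lemma transmit_A_B:
  assumes w: "w \<in> msgs" and \<rho>: "\<rho> \<in> rands"
    and "e \<in> edges_A_B" "\<forall>e'\<in>edges_S_A. V e' = Some (edge_val w \<rho> e')"
  shows "transmit e (local_view Src (fst e) w \<rho> V) = edge_val w \<rho> e"
proof -
  obtain t where t: "t \<in> {1..m}" "e = (AA t, BB t)" using assms(3) unfolding edges_A_B_def by blast
  let ?s = "share w (\<rho> Src)"
  have V: "V (SS i, AA t) = Some (edge_val w \<rho> (SS i, AA t))" if "i \<in> {1..h}" "t = i \<or> h < t"
    for i
    using assms(4) that t(1) unfolding edges_S_A_def by auto
  show ?thesis
  proof (cases "t \<le> h")
    case True
    then show ?thesis using V[of t] t by (simp add: local_view_def)
  next
    case False
    have s: "?s i \<in> carrier F" "noise \<rho> i \<in> carrier F"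
      "lagrange_basis {1..h} i t \<in> carrier F" if "i \<in> {1..h}" for i
      using that t(1) share_closed[OF w rand_Src[OF \<rho>]] noise_closed[OF \<rho>]
        lagrange_coeff_closed h_le_m by auto
    have "(\<Oplus>i\<in>{1..h}. the (V (SS i, AA t)))
        = (\<Oplus>i\<in>{1..h}. ?s i \<otimes> lagrange_basis {1..h} i t \<oplus> noise \<rho> i)"
      using V False s by (intro finsum_cong') auto
    also have "\<dots> = interpolant {1..h} ?s t \<oplus> finsum F (noise \<rho>) {1..h}"
      unfolding interpolant_def using s by (intro finsum_addf) auto
    also have "\<dots> = ?s t"
      using interpolant_share[OF w rand_Src[OF \<rho>]] noise_sum[OF \<rho>] s t(1) share_closed[OF w rand_Src[OF \<rho>]]
      by simp
    finally show ?thesis using False t(2) by (simp add: local_view_def)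
  qed
qed

lemma transmit_B_Rcv:
  assumes "e \<in> edges_B_Rcv" "\<forall>e'\<in>edges_A_B. V e' = Some (edge_val w \<rho> e')"
  shows "transmit e (local_view Src (fst e) w \<rho> V) = edge_val w \<rho> e"
proof -
  obtain t T where t: "t \<in> T" "T \<subseteq> {1..m}" "e = (BB t, Rcv T)"
    using assms(1) unfolding edges_B_Rcv_def by blast
  then have "V (AA t, BB t) = Some (share w (\<rho> Src) t)"
    using assms(2) unfolding edges_A_B_def by auto
  then show ?thesis using t(3) by (simp add: local_view_def)
qed

end

lemma causal_schedule:
  assumes "w \<in> msgs" "\<rho> \<in> rands"
  shows "causal_blocks Src protocol_enc w \<rho> (edge_val w \<rho>) {} (map list_of_set edge_blocks)"
proof -
  let ?det = "determined_by Src protocol_enc w \<rho> (edge_val w \<rho>)"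
  have "set (list_of_set X) = X" if "X \<in> set edge_blocks" for X
    using list_of_set finite_edge_blocks that by blast
  then have sets:
    "set (list_of_set edges_R0_B) = edges_R0_B" "set (list_of_set edges_B_A) = edges_B_A"
    "set (list_of_set edges_A_S) = edges_A_S" "set (list_of_set edges_Src_S) = edges_Src_S"
    "set (list_of_set edges_S_A) = edges_S_A" "set (list_of_set edges_A_B) = edges_A_B"
    "set (list_of_set edges_B_Rcv) = edges_B_Rcv"
    unfolding edge_blocks_def by simp_all
  have det: "?det D e" if "e \<in> X" "X \<in> set edge_blocks" "D' \<subseteq> D"
    "\<And>V. \<forall>e'\<in>D'. V e' = Some (edge_val w \<rho> e') \<Longrightarrow>
       transmit e (local_view Src (fst e) w \<rho> V) = edge_val w \<rho> e" for D D' e X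
    using determined_by_transmit[OF assms, of e D' D] that by blast
  have "\<forall>e\<in>edges_R0_B. ?det D e" "\<forall>e\<in>edges_Src_S. ?det D e" for D
    using det[where D'="{}"] transmit_R0_B transmit_Src_S
    unfolding edge_blocks_def by auto
  moreover have "edges_R0_B \<subseteq> D \<Longrightarrow> \<forall>e\<in>edges_B_A. ?det D e" for D
    using det[where D'=edges_R0_B] transmit_B_A unfolding edge_blocks_def by auto
  moreover have "edges_B_A \<subseteq> D \<Longrightarrow> \<forall>e\<in>edges_A_S. ?det D e" for D
    using det[where D'=edges_B_A] transmit_A_S unfolding edge_blocks_def by auto
  moreover have "\<forall>e\<in>edges_S_A. ?det (edges_R0_B \<union> edges_B_A \<union> edges_A_S \<union> edges_Src_S) e"
  proof
    fix e assume "e \<in> edges_S_A"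
    then show "?det (edges_R0_B \<union> edges_B_A \<union> edges_A_S \<union> edges_Src_S) e"
      using transmit_S_A
      by (intro det[where X=edges_S_A and D'="edges_A_S \<union> edges_Src_S"]) (auto simp: edge_blocks_def)
  qed
  moreover have "edges_S_A \<subseteq> D \<Longrightarrow> \<forall>e\<in>edges_A_B. ?det D e" for D
    using det[where D'=edges_S_A] transmit_A_B[OF assms] unfolding edge_blocks_def by auto
  moreover have "edges_A_B \<subseteq> D \<Longrightarrow> \<forall>e\<in>edges_B_Rcv. ?det D e" for D
    using det[where D'=edges_A_B] transmit_B_Rcv unfolding edge_blocks_def by auto
  ultimately show ?thesis
    unfolding edge_blocks_def by (simp add: sets)
qed

lemma exec_round_schedule:
  assumes "w \<in> msgs" "\<rho> \<in> rands"
  shows "exec_round Src protocol_enc schedule w \<rho> =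
    (\<lambda>e. if e \<in> used_edges then Some (edge_val w \<rho> e) else None)"
  using exec_round_causal_blocks[OF causal_schedule[OF assms], folded schedule_def]
  unfolding set_schedule .

definition protocol_dec :: "node \<Rightarrow> local_info \<Rightarrow> nat list" where
  "protocol_dec u x = (case u of
      Rcv T \<Rightarrow> (let y = (\<lambda>t. the (snd (snd x) (BB t, Rcv T)))
               in map (\<lambda>j. interpolant T y (Suc m + j) \<ominus> interpolant T y (m + h)) [0..<h - 1])
    | _ \<Rightarrow> [])"

lemma protocol_dec_correct:
  assumes "w \<in> msgs" "\<rho> \<in> rands" "R \<in> ccn_receivers m h"
  shows "protocol_dec R (local_view Src R w \<rho> (exec_round Src protocol_enc schedule w \<rho>)) = w"
proof -
  obtain T where T: "R = Rcv T" "T \<subseteq> {1..m}" "card T = h"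
    using assms(3) unfolding ccn_receivers_def by auto
  let ?k = "\<rho> Src"
  let ?y = "\<lambda>t. the (exec_round Src protocol_enc schedule w \<rho> (BB t, Rcv T))"
  have k: "?k \<in> carrier F" using rand_Src[OF assms(2)] .
  have "(BB t, Rcv T) \<in> edges_B_Rcv" if "t \<in> T" for t
    using T that unfolding edges_B_Rcv_def by blast
  then have "(BB t, Rcv T) \<in> used_edges" if "t \<in> T" for t
    using that unfolding edge_blocks_def by simp
  then have y: "?y t = share w ?k t" if "t \<in> T" for t
    using that exec_round_schedule[OF assms(1,2)] by simp
  have interp: "interpolant T ?y X = share w ?k X" if "X \<in> carrier F" for X
  proof (rule lagrange_interpolation)
    show "finite T" "T \<subseteq> carrier F" "T \<noteq> {}"
      using T h_pos point_closed finite_subset[OF T(2)] by (auto simp: subset_eq)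
    show "polyfun (card T - 1) (share w ?k)" using share_polyfun[OF assms(1) k] T(3) by simp
  qed (use y that in auto)
  have "protocol_dec R (local_view Src R w \<rho> (exec_round Src protocol_enc schedule w \<rho>))
      = map (\<lambda>j. share w ?k (Suc m + j) \<ominus> share w ?k (m + h)) [0..<h - 1]"
    unfolding T(1) protocol_dec_def local_view_def using interp point_closed by simp
  also have "\<dots> = map (\<lambda>j. w ! j) [0..<h - 1]"
  proof (rule map_cong)
    fix j assume "j \<in> set [0..<h - 1]"
    moreover have "set w \<subseteq> carrier F" using assms(1) unfolding msgs_def by simp
    ultimately have "w ! j \<in> carrier F" using assms(1) unfolding msgs_def by auto
    with \<open>j \<in> set [0..<h - 1]\<close> show "share w ?k (Suc m + j) \<ominus> share w ?k (m + h) = w ! j"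
      using share_at_msg_point[OF assms(1) k] share_at_key_point[OF assms(1) k] k by simp algebra
  qed simp
  also have "\<dots> = w" using assms(1) map_nth[of w] unfolding msgs_def by simp
  finally show ?thesis .
qed

lemma share_key_shift:
  assumes "w1 \<in> msgs" "w2 \<in> msgs" "k \<in> carrier F" "t \<le> m + h"
  shows "share w2 (k \<oplus> (msg_part w1 t \<ominus> msg_part w2 t)) t = share w1 k t"
proof -
  have "msg_part w1 t \<in> carrier F" "msg_part w2 t \<in> carrier F"
    using assms msg_part_closed by auto
  then show ?thesis unfolding share_def using assms(3) by algebra
qed

definition shift_noise :: "(nat \<Rightarrow> nat) \<Rightarrow> nat \<Rightarrow> nat" where
  "shift_noise d r = inv_into {..<card noise_vectors} noise_enum (\<lambda>i\<in>{1..h}. noise_enum r i \<oplus> d i)"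

lemma noise_vectors_add:
  assumes "n \<in> noise_vectors" "d \<in> noise_vectors"
  shows "(\<lambda>i\<in>{1..h}. n i \<oplus> d i) \<in> noise_vectors"
proof -
  have c: "n i \<in> carrier F" "d i \<in> carrier F" if "i \<in> {1..h}" for i
    using assms that noise_vectors_closed by blast+
  have "finsum F (\<lambda>i\<in>{1..h}. n i \<oplus> d i) {1..h} = (\<Oplus>i\<in>{1..h}. n i \<oplus> d i)"
    using c by (intro finsum_cong') auto
  also have "\<dots> = finsum F n {1..h} \<oplus> finsum F d {1..h}"
    using c by (intro finsum_addf) auto
  also have "\<dots> = \<zero>" using assms unfolding noise_vectors_def by simp
  finally show ?thesis using c unfolding noise_vectors_def by (simp add: restrict_PiE_iff)
qed

context
  fixes d :: "nat \<Rightarrow> nat"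
  assumes d: "d \<in> noise_vectors"
begin

lemma shift_noise:
  assumes "r < card noise_vectors"
  shows "shift_noise d r < card noise_vectors"
    and "noise_enum (shift_noise d r) = (\<lambda>i\<in>{1..h}. noise_enum r i \<oplus> d i)"
proof -
  have "noise_enum r \<in> noise_vectors" using bij_noise_enum assms by (blast dest: bij_betwE)
  then have "(\<lambda>i\<in>{1..h}. noise_enum r i \<oplus> d i) \<in> noise_enum ` {..<card noise_vectors}"
    using noise_vectors_add d bij_noise_enum by (simp add: bij_betw_imp_surj_on)
  then show "shift_noise d r < card noise_vectors"
    and "noise_enum (shift_noise d r) = (\<lambda>i\<in>{1..h}. noise_enum r i \<oplus> d i)"
    unfolding shift_noise_def using inv_into_into[of _ noise_enum "{..<card noise_vectors}"]
    by (simp_all add: f_inv_into_f)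
qed

lemma inj_on_shift_noise: "inj_on (shift_noise d) {..<card noise_vectors}"
proof
  fix r r' assume r: "r \<in> {..<card noise_vectors}" "r' \<in> {..<card noise_vectors}"
    and eq: "shift_noise d r = shift_noise d r'"
  have n: "noise_enum r \<in> noise_vectors" "noise_enum r' \<in> noise_vectors"
    using bij_noise_enum r by (blast dest: bij_betwE)+
  have "noise_enum r i = noise_enum r' i" for i
  proof (cases "i \<in> {1..h}")
    case True
    have restr: "(\<lambda>i\<in>{1..h}. noise_enum r i \<oplus> d i) = (\<lambda>i\<in>{1..h}. noise_enum r' i \<oplus> d i)"
      using shift_noise(2)[of r] shift_noise(2)[of r'] r eq by simp
    have "noise_enum r i \<oplus> d i = noise_enum r' i \<oplus> d i"
      using fun_cong[OF restr, of i] unfolding restrict_apply'[OF True] .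
    moreover have "noise_enum r i \<in> carrier F" "noise_enum r' i \<in> carrier F" "d i \<in> carrier F"
      using n d True noise_vectors_closed by blast+
    ultimately show ?thesis by simp
  next
    case False
    then show ?thesis
      using PiE_arb[OF noise_vectors_PiE[OF n(1)]] PiE_arb[OF noise_vectors_PiE[OF n(2)]] by simp
  qed
  then have "noise_enum r = noise_enum r'" ..
  then show "r = r'" using bij_noise_enum r by (simp add: bij_betw_def inj_on_def)
qed


end

definition rand_shift :: "nat \<Rightarrow> (nat \<Rightarrow> nat \<Rightarrow> nat) \<Rightarrow> (node \<Rightarrow> nat) \<Rightarrow> node \<Rightarrow> nat" where
  "rand_shift c \<delta> \<rho> = \<rho>(Src := \<rho> Src \<oplus> c, R0 := shift_noise (\<delta> (\<rho> Src)) (\<rho> R0))"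

lemma Src_ne_R0: "Src \<noteq> R0"
  unfolding R0_def by simp

lemma finite_rands: "finite rands"
proof -
  have "ccn_receivers m h \<subseteq> Rcv ` Pow {1..m}" unfolding ccn_receivers_def by auto
  then have "finite (ccn_nodes m h)" unfolding ccn_nodes_def by (auto intro: finite_subset)
  then show ?thesis unfolding rands_def by (intro finite_PiE) auto
qed

context
  fixes c :: nat and \<delta> :: "nat \<Rightarrow> nat \<Rightarrow> nat"
  assumes c: "c \<in> carrier F" and \<delta>: "\<And>k. k \<in> carrier F \<Longrightarrow> \<delta> k \<in> noise_vectors"
begin

lemma rand_shift_in_rands:
  assumes "\<rho> \<in> rands"
  shows "rand_shift c \<delta> \<rho> \<in> rands"
proof -
  have Src: "Src \<in> ccn_nodes m h" unfolding ccn_nodes_def by simp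
  have "\<rho> Src \<oplus> c \<in> carrier F" using rand_Src[OF assms] c by simp
  then have "\<rho> Src \<oplus> c \<in> {..<rand_bound Src}" unfolding carrier_eq rand_bound_def by simp
  then have "\<rho>(Src := \<rho> Src \<oplus> c) \<in> rands"
    using PiE_fun_upd[of _ "\<lambda>u. {..<rand_bound u}" Src \<rho> "ccn_nodes m h"] assms Src
    unfolding rands_def by (simp add: insert_absorb)
  moreover have "shift_noise (\<delta> (\<rho> Src)) (\<rho> R0) \<in> {..<rand_bound R0}"
    using shift_noise(1)[OF \<delta> rand_R0[OF assms]] rand_Src[OF assms] Src_ne_R0
    by (simp add: rand_bound_def)
  ultimately show ?thesis
    using PiE_fun_upd[of _ "\<lambda>u. {..<rand_bound u}" R0 _ "ccn_nodes m h"] R0_in_nodes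
    unfolding rands_def rand_shift_def by (simp add: insert_absorb)
qed

lemma inj_on_rand_shift: "inj_on (rand_shift c \<delta>) rands"
proof
  fix \<rho> \<rho>' assume \<rho>: "\<rho> \<in> rands" "\<rho>' \<in> rands" and eq: "rand_shift c \<delta> \<rho> = rand_shift c \<delta> \<rho>'"
  have "\<rho> Src \<oplus> c = \<rho>' Src \<oplus> c"
    using fun_cong[OF eq, of Src] Src_ne_R0 unfolding rand_shift_def by simp
  then have Src: "\<rho> Src = \<rho>' Src" using rand_Src \<rho> c by simp
  have "shift_noise (\<delta> (\<rho> Src)) (\<rho> R0) = shift_noise (\<delta> (\<rho> Src)) (\<rho>' R0)"
    using fun_cong[OF eq, of R0] Src unfolding rand_shift_def by simp
  then have R0: "\<rho> R0 = \<rho>' R0"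
    using inj_on_shift_noise[OF \<delta>[OF rand_Src[OF \<rho>(1)]]] rand_R0 \<rho> by (simp add: inj_on_def)
  show "\<rho> = \<rho>'"
  proof
    fix u show "\<rho> u = \<rho>' u"
      using fun_cong[OF eq, of u] Src R0 unfolding rand_shift_def by (cases "u = Src \<or> u = R0") auto
  qed
qed

lemma noise_rand_shift:
  assumes "\<rho> \<in> rands" "i \<in> {1..h}"
  shows "noise (rand_shift c \<delta> \<rho>) i = noise \<rho> i \<oplus> \<delta> (\<rho> Src) i"
  using shift_noise(2)[OF \<delta>[OF rand_Src[OF assms(1)]] rand_R0[OF assms(1)]] assms(2)
  unfolding noise_def rand_shift_def by simp

lemma Src_rand_shift: "rand_shift c \<delta> \<rho> Src = \<rho> Src \<oplus> c"
  unfolding rand_shift_def using Src_ne_R0 by simp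

lemma secrecy_by_rand_shift:
  assumes "w1 \<in> msgs" "w2 \<in> msgs"
    and "\<And>\<rho> e. \<rho> \<in> rands \<Longrightarrow> e \<in> used_edges \<Longrightarrow> snd e = v \<Longrightarrow>
           edge_val w2 (rand_shift c \<delta> \<rho>) e = edge_val w1 \<rho> e"
  shows "card {\<rho>\<in>rands. adv_view Src protocol_enc schedule v w1 \<rho> = x}
       = card {\<rho>\<in>rands. adv_view Src protocol_enc schedule v w2 \<rho> = x}"
proof (rule card_fibres_eq_if_inj[OF finite_rands inj_on_rand_shift])
  show "rand_shift c \<delta> ` rands \<subseteq> rands" using rand_shift_in_rands by blast
  show "\<forall>\<rho>\<in>rands. adv_view Src protocol_enc schedule v w2 (rand_shift c \<delta> \<rho>)
      = adv_view Src protocol_enc schedule v w1 \<rho>"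
    using assms(3) rand_shift_in_rands
    by (auto simp: adv_view_def exec_round_schedule[OF assms(1)] exec_round_schedule[OF assms(2)])
qed

end

lemma edge_val_unmasked:
  assumes "e \<in> used_edges" "snd e \<in> {SS a, AA a, BB a}" "snd e = AA a \<Longrightarrow> a \<le> h"
  shows "(a \<in> {1..h} \<and> (\<forall>w \<rho>. edge_val w \<rho> e = noise \<rho> a))
    \<or> (\<forall>w \<rho>. edge_val w \<rho> e = share w (\<rho> Src) a)"
  using assms(1)
proof (cases rule: used_edgesE)
  case (S_A_masked i j)
  then show ?thesis using assms(2,3) by auto
qed (use assms(2) in \<open>auto simp: R0_def\<close>)

lemma secrecy_unmasked:
  assumes "w1 \<in> msgs" "w2 \<in> msgs" "v \<in> {SS a, AA a, BB a}" "a \<le> m" "v = AA a \<Longrightarrow> a \<le> h"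
  shows "card {\<rho>\<in>rands. adv_view Src protocol_enc schedule v w1 \<rho> = x}
       = card {\<rho>\<in>rands. adv_view Src protocol_enc schedule v w2 \<rho> = x}"
proof -
  let ?c = "msg_part w1 a \<ominus> msg_part w2 a"
  let ?\<delta> = "\<lambda>k. \<lambda>i\<in>{1..h}. \<zero>"
  have c: "?c \<in> carrier F" using msg_part_closed assms(1,2,4) by simp
  show ?thesis
  proof (rule secrecy_by_rand_shift[OF c zero_in_noise_vectors assms(1,2)])
    fix \<rho> e assume \<rho>: "\<rho> \<in> rands" and e: "e \<in> used_edges" "snd e = v"
    consider "a \<in> {1..h}" "\<And>w \<rho>. edge_val w \<rho> e = noise \<rho> a"
      | "\<And>w \<rho>. edge_val w \<rho> e = share w (\<rho> Src) a"
      using edge_val_unmasked[OF e(1)] e(2) assms(3,5) by blast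
    then show "edge_val w2 (rand_shift ?c ?\<delta> \<rho>) e = edge_val w1 \<rho> e"
    proof cases
      case 1
      then show ?thesis
        using noise_rand_shift[OF c zero_in_noise_vectors \<rho>] noise_closed[OF \<rho>] by simp
    next
      case 2
      then show ?thesis
        using Src_rand_shift[OF c zero_in_noise_vectors] share_key_shift assms rand_Src[OF \<rho>]
        by simp
    qed
  qed
qed

text \<open>At A_t with t > h the noise is shifted by the Lagrange-weighted differences of the shares;
  these add up to zero because the two share polynomials agree at t.\<close>

lemma secrecy_masked:
  assumes "w1 \<in> msgs" "w2 \<in> msgs" "h < t" "t \<le> m"
  shows "card {\<rho>\<in>rands. adv_view Src protocol_enc schedule (AA t) w1 \<rho> = x}
       = card {\<rho>\<in>rands. adv_view Src protocol_enc schedule (AA t) w2 \<rho> = x}"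
proof -
  define c where "c = msg_part w1 t \<ominus> msg_part w2 t"
  define D where "D k X = share w1 k X \<ominus> share w2 (k \<oplus> c) X" for k X
  define \<delta> where "\<delta> k = (\<lambda>i\<in>{1..h}. D k i \<otimes> lagrange_basis {1..h} i t)" for k
  have c: "c \<in> carrier F" unfolding c_def using msg_part_closed assms by simp
  have D: "D k i \<in> carrier F" if "k \<in> carrier F" "i \<le> m + h" for k i
    unfolding D_def using share_closed assms(1,2) c that by simp
  have L: "lagrange_basis {1..h} i t \<in> carrier F" if "i \<in> {1..h}" for i
    using lagrange_coeff_closed that assms(4) by simp
  have \<delta>: "\<delta> k \<in> noise_vectors" if k: "k \<in> carrier F" for k
  proof -
    have "finsum F (\<delta> k) {1..h} = interpolant {1..h} (D k) t"
      unfolding \<delta>_def interpolant_def using D[OF k] L h_le_m by (intro finsum_cong') auto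
    also have "\<dots> = D k t"
    proof (rule lagrange_interpolation)
      show "polyfun (card {1..h} - 1) (D k)"
        unfolding D_def[abs_def] using share_polyfun assms(1,2) k c by (simp add: polyfun_diff)
    qed (use h_pos point_closed assms(4) in \<open>auto simp: subset_eq\<close>)
    also have "\<dots> = \<zero>"
      unfolding D_def c_def using share_key_shift assms share_closed k by simp
    finally show ?thesis
      unfolding noise_vectors_def \<delta>_def using D[OF k] L h_le_m by (simp add: restrict_PiE_iff)
  qed
  show ?thesis
  proof (rule secrecy_by_rand_shift[OF c \<delta> assms(1,2)])
    fix \<rho> e assume \<rho>: "\<rho> \<in> rands" and e: "e \<in> used_edges" "snd e = AA t"
    obtain i where i: "i \<in> {1..h}" "e = (SS i, AA t)"
      using e assms(3) by (cases rule: used_edgesE) auto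
    let ?k = "\<rho> Src"
    have k: "?k \<in> carrier F" using rand_Src[OF \<rho>] .
    have "share w1 ?k i \<in> carrier F" "share w2 (?k \<oplus> c) i \<in> carrier F" "noise \<rho> i \<in> carrier F"
      using share_closed assms(1,2) k c noise_closed[OF \<rho>] i(1) h_le_m by auto
    then show "edge_val w2 (rand_shift c \<delta> \<rho>) e = edge_val w1 \<rho> e"
      using i assms(3) noise_rand_shift[OF c \<delta> \<rho> i(1)] Src_rand_shift[OF c \<delta>] L[OF i(1)]
      unfolding \<delta>_def D_def by simp algebra
  qed
qed

lemma perfect_secrecy:
  assumes "v \<in> ccn_nodes m h - {Src} - ccn_receivers m h" "w1 \<in> msgs" "w2 \<in> msgs"
  shows "card {\<rho>\<in>rands. adv_view Src protocol_enc schedule v w1 \<rho> = x}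
       = card {\<rho>\<in>rands. adv_view Src protocol_enc schedule v w2 \<rho> = x}"
proof -
  consider a where "v \<in> {SS a, AA a, BB a}" "a \<le> m" "v = AA a \<Longrightarrow> a \<le> h"
    | t where "v = AA t" "h < t" "t \<le> m"
    using assms(1) h_le_m unfolding ccn_nodes_def by fastforce
  then show ?thesis
    by cases (use secrecy_unmasked secrecy_masked assms(2,3) in blast)+
qed

theorem secure_scheme:
  "secure_single_round_scheme (ccn_nodes m h) (bidir_ccn_edges m h) Src (ccn_receivers m h) F (h - 1)"
proof -
  have "\<forall>u\<in>ccn_nodes m h. 0 < rand_bound u"
    using points_lt finite_noise_vectors zero_in_noise_vectors
    by (auto simp: rand_bound_def card_gt_0_iff)
  moreover have "\<forall>e x. protocol_enc e x \<in> carrier F" unfolding protocol_enc_def by simp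
  moreover have "\<forall>w\<in>msgs. \<forall>\<rho>\<in>rands. \<forall>R\<in>ccn_receivers m h.
      protocol_dec R (local_view Src R w \<rho> (exec_round Src protocol_enc schedule w \<rho>)) = w"
    using protocol_dec_correct by blast
  moreover have "\<forall>v\<in>ccn_nodes m h - {Src} - ccn_receivers m h. \<forall>w1\<in>msgs. \<forall>w2\<in>msgs. \<forall>x.
      card {\<rho>\<in>rands. adv_view Src protocol_enc schedule v w1 \<rho> = x}
    = card {\<rho>\<in>rands. adv_view Src protocol_enc schedule v w2 \<rho> = x}"
    using perfect_secrecy by blast
  ultimately have scheme: "(\<forall>u\<in>ccn_nodes m h. 0 < rand_bound u)
      \<and> distinct schedule \<and> set schedule \<subseteq> bidir_ccn_edges m h
      \<and> (\<forall>e x. protocol_enc e x \<in> carrier F)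
      \<and> (\<forall>w\<in>msgs. \<forall>\<rho>\<in>rands. \<forall>R\<in>ccn_receivers m h.
          protocol_dec R (local_view Src R w \<rho> (exec_round Src protocol_enc schedule w \<rho>)) = w)
      \<and> (\<forall>v\<in>ccn_nodes m h - {Src} - ccn_receivers m h. \<forall>w1\<in>msgs. \<forall>w2\<in>msgs. \<forall>x.
          card {\<rho>\<in>rands. adv_view Src protocol_enc schedule v w1 \<rho> = x}
        = card {\<rho>\<in>rands. adv_view Src protocol_enc schedule v w2 \<rho> = x})"
    using distinct_schedule schedule_edges by blast
  show ?thesis
    unfolding secure_single_round_scheme_def Let_def msgs_def[symmetric]
    by (intro exI[of _ rand_bound] exI[of _ schedule] exI[of _ protocol_enc] exI[of _ protocol_dec])
      (fact scheme[unfolded rands_def])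
qed

end

theorem lemma2:
  fixes m h :: nat
  assumes "2 \<le> h" and "h + 1 \<le> m"
  shows "\<exists>F :: nat ring. field F \<and> finite (carrier F) \<and>
           secure_single_round_scheme (ccn_nodes m h) (bidir_ccn_edges m h) Src
             (ccn_receivers m h) F (h - 1)"
proof -
  obtain F :: "nat ring" and q where F: "field F" "carrier F = {..<q}" "m + h < q"
    using exists_field_carrier_lessThan by blast
  have "ccn_scheme F m h q"
    using F assms by (intro ccn_scheme.intro ccn_scheme_axioms.intro) auto
  then have "secure_single_round_scheme (ccn_nodes m h) (bidir_ccn_edges m h) Src
      (ccn_receivers m h) F (h - 1)"
    by (rule ccn_scheme.secure_scheme)
  moreover have "finite (carrier F)" using F(2) by simp
  ultimately show ?thesis using F(1) by blast
qed

end
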